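(* Any algorithm that returns islands compatible with those returned by overlap-greedy has approximation ratio $\Omega(\max\{\mathrm{Opt}_{\mathrm{P}},\sqrt{n}\})$. That is, there exist a constant $c>0$ and inputs $S$ with arbitrarily large $n$ and arbitrarily large $\mathrm{Opt}_{\mathrm{P}}(S)$ such that, if $I_1,\dots,I_m$ are the islands returned by overlap-greedy on $S$, every set of islands compatible with $I_1,\dots,I_m$ has cardinality at least $c\cdot\max\{\mathrm{Opt}_{\mathrm{P}}(S),\sqrt{n}\}\cdot \mathrm{Opt}_{\mathrm{P}}(S)$.
   Context: The input is a set $S$ of $n$ points in the plane, each having one of $k\ge 2$ colors. A set of points is monochromatic if all its points have the same color. An island is a subset $I\subseteq S$ with $\mathrm{CH}(I)\cap S=I$, where $\mathrm{CH}(I)$ is the convex hull of $I$. An island partition of $S$ is a partition of $S$ into monochromatic islands whose convex hulls are pairwise disjoint; $\mathrm{Opt}_{\mathrm{P}}(S)$ denotes its minimum possible cardinality. Overlap-greedy computes an island cover (islands may overlap): it repeatedly chooses a monochromatic island covering the maximum number of not-yet-covered points of $S$, breaking ties by choosing an island covering the fewest previously covered points, until all of $S$ is covered; it returns the chosen islands $I_1,\dots,I_m$ in order. Families $\mathcal{I}'_1,\dots,\mathcal{I}'_m$ of islands are compatible with islands $I_1,\dots,I_m$ if (i) $\bigcup_k\bigcup\mathcal{I}'_k=\bigcup_i I_i$, (ii) $\bigcup\mathcal{I}'_i\subseteq I_i$ for every $i$, and (iii) the islands in $\bigcup_k\mathcal{I}'_k$ are pairwise disjoint (their convex hulls are pairwise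 disjoint). Islands $I'_1,\dots,I'_{m'}$ are compatible with $I_1,\dots,I_m$ if $\{I'_1,\dots,I'_{m'}\}$ can be partitioned into families compatible with $I_1,\dots,I_m$. *)

theory Defs
  imports "HOL-Analysis.Analysis"
begin

type_synonym point = "real \<times> real"

definition island :: "point set \<Rightarrow> point set \<Rightarrow> bool" where
  "island S I \<longleftrightarrow> I \<subseteq> S \<and> convex hull I \<inter> S = I"

definition monochromatic :: "(point \<Rightarrow> nat) \<Rightarrow> point set \<Rightarrow> bool" where
  "monochromatic col I \<longleftrightarrow> (\<forall>p\<in>I. \<forall>q\<in>I. col p = col q)"

definition mono_island :: "point set \<Rightarrow> (point \<Rightarrow> nat) \<Rightarrow> point set \<Rightarrow> bool" where
  "mono_island S col I \<longleftrightarrow> island S I \<and> monochromatic col I"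

definition island_partition :: "point set \<Rightarrow> (point \<Rightarrow> nat) \<Rightarrow> point set set \<Rightarrow> bool" where
  "island_partition S col P \<longleftrightarrow>
     \<Union>P = S \<and> (\<forall>I\<in>P. I \<noteq> {} \<and> mono_island S col I) \<and>
     (\<forall>A\<in>P. \<forall>B\<in>P. A \<noteq> B \<longrightarrow> convex hull A \<inter> convex hull B = {})"

definition Opt_P :: "point set \<Rightarrow> (point \<Rightarrow> nat) \<Rightarrow> nat" where
  "Opt_P S col = Min {card P | P. island_partition S col P}"

definition overlap_greedy :: "point set \<Rightarrow> (point \<Rightarrow> nat) \<Rightarrow> point set list \<Rightarrow> bool" where
  "overlap_greedy S col Is \<longleftrightarrow>
     \<Union>(set Is) = S \<and>
     (\<forall>i<length Is.
        let C = \<Union>(set (take i Is)); I = Is ! i in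
          C \<noteq> S \<and> mono_island S col I \<and>
          (\<forall>I'. mono_island S col I' \<longrightarrow> card (I' - C) \<le> card (I - C)) \<and>
          (\<forall>I'. mono_island S col I' \<and> card (I' - C) = card (I - C)
                \<longrightarrow> card (I \<inter> C) \<le> card (I' \<inter> C)))"

definition compatible :: "point set \<Rightarrow> point set list \<Rightarrow> point set set \<Rightarrow> bool" where
  "compatible S Is J \<longleftrightarrow>
     (\<forall>I\<in>J. island S I) \<and>
     (\<exists>F :: nat \<Rightarrow> point set set.
        J = (\<Union>i<length Is. F i) \<and>
        (\<forall>i<length Is. \<forall>j<length Is. i \<noteq> j \<longrightarrow> F i \<inter> F j = {}) \<and>
        (\<Union>i<length Is. \<Union>(F i)) = \<Union>(set Is) \<and>
        (\<forall>i<length Is. \<Union>(F i) \<subseteq> Is ! i) \<and>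
        (\<forall>A\<in>J. \<forall>B\<in>J. A \<noteq> B \<longrightarrow> convex hull A \<inter> convex hull B = {}))"

end

(*
  The board consists of the integer points of [1, 2k+1]^2 with odd coordinate sum, coloured
  red when the abscissa is odd and blue otherwise. The red points form k rows and the blue
  points k columns of k+1 points each, and every red row crosses every blue column in a
  lattice point that is not on the board.

  A monochromatic island of the board is collinear: if it contained a triangle of nonzero
  area, one of the midpoints of its sides would have odd coordinate sum, hence lie on the
  board and in the island, and span a triangle of half the area. So islands have at most
  k+1 points, with equality exactly for the full rows and columns. Consequently overlap-greedy
  picks only full rows and columns, and 2k <= Opt_P <= 2k+1, the upper bound coming from
  the partition into horizontal lines.

  A compatible family refines these rows and columns into islands with disjoint hulls. At
  each of the k^2 crossings the red row or the blue column is split between two islands, as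
  otherwise both hulls contain the crossing, and by convexity mapping each crossing to the
  island just after its split is injective. So the family has at least k^2 members, whereas
  Opt_P and the square root of the number of points are both at most 3k.
*)
theory Submission
  imports Defs
begin

section \<open>Collinear sets of lattice points\<close>

definition twice_area :: "int \<times> int \<Rightarrow> int \<times> int \<Rightarrow> int \<times> int \<Rightarrow> int" where
  "twice_area P Q R = (fst Q - fst P) * (snd R - snd P) - (snd Q - snd P) * (fst R - fst P)"

definition lattice_collinear :: "(int \<times> int) set \<Rightarrow> bool" where
  "lattice_collinear T \<longleftrightarrow> (\<forall>P\<in>T. \<forall>Q\<in>T. \<forall>R\<in>T. twice_area P Q R = 0)"

definition lattice_midpoint :: "int \<times> int \<Rightarrow> int \<times> int \<Rightarrow> int \<times> int" where
  "lattice_midpoint P Q = ((fst P + fst Q) div 2, (snd P + snd Q) div 2)"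

lemma twice_area_rotate: "twice_area P Q R = twice_area Q R P"
  by (simp add: twice_area_def algebra_simps)

lemma twice_area_swap: "twice_area P R Q = - twice_area P Q R"
  by (simp add: twice_area_def algebra_simps)

lemma twice_area_swap_coordinates:
  "twice_area (prod.swap P) (prod.swap Q) (prod.swap R) = - twice_area P Q R"
  by (simp add: twice_area_def algebra_simps)

lemma double_lattice_midpoint:
  assumes "even (fst P + fst Q)" "even (snd P + snd Q)"
  shows "2 * fst (lattice_midpoint P Q) = fst P + fst Q" "2 * snd (lattice_midpoint P Q) = snd P + snd Q"
  using assms by (simp_all add: lattice_midpoint_def)

lemma twice_area_lattice_midpoint:
  assumes "even (fst P + fst Q)" "even (snd P + snd Q)"
  shows "2 * twice_area P (lattice_midpoint P Q) R = twice_area P Q R"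
proof -
  note M = double_lattice_midpoint[OF assms]
  have "2 * twice_area P (lattice_midpoint P Q) R
      = (2 * fst (lattice_midpoint P Q) - 2 * fst P) * (snd R - snd P)
        - (2 * snd (lattice_midpoint P Q) - 2 * snd P) * (fst R - fst P)"
    by (simp add: twice_area_def algebra_simps)
  then show ?thesis
    unfolding M by (simp add: twice_area_def algebra_simps)
qed

text \<open>The lattice points of a monochromatic island of the board have these properties.\<close>

locale odd_midpoint_closed =
  fixes T :: "(int \<times> int) set"
  assumes same_parity: "\<And>P Q. P \<in> T \<Longrightarrow> Q \<in> T \<Longrightarrow> even (fst P + fst Q) \<and> even (snd P + snd Q)"
    and odd_coordinate_sum: "\<And>P. P \<in> T \<Longrightarrow> odd (fst P + snd P)"
    and midpoint_mem: "\<And>P Q. P \<in> T \<Longrightarrow> Q \<in> T \<Longrightarrow>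
      odd (fst (lattice_midpoint P Q) + snd (lattice_midpoint P Q)) \<Longrightarrow> lattice_midpoint P Q \<in> T"
begin

lemma exists_half_area_triangle:
  assumes "P \<in> T" "Q \<in> T" "R \<in> T"
  shows "\<exists>P'\<in>T. \<exists>Q'\<in>T. \<exists>R'\<in>T. 2 * \<bar>twice_area P' Q' R'\<bar> = \<bar>twice_area P Q R\<bar>"
proof -
  define s where "s X = fst X + snd X" for X :: "int \<times> int"
  have double_s: "2 * s (lattice_midpoint X Y) = s X + s Y" if "X \<in> T" "Y \<in> T" for X Y
    using double_lattice_midpoint[of X Y] same_parity[OF that] by (simp add: s_def algebra_simps)
  have "s (lattice_midpoint P Q) + s (lattice_midpoint P R) + s (lattice_midpoint Q R) = s P + s Q + s R"
    using double_s[of P Q] double_s[of P R] double_s[of Q R] assms by linarith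
  moreover have "odd (s P + s Q + s R)"
    using odd_coordinate_sum assms by (simp add: s_def)
  ultimately consider "odd (s (lattice_midpoint P Q))" | "odd (s (lattice_midpoint P R))"
    | "odd (s (lattice_midpoint Q R))"
    by (metis odd_add)
  then show ?thesis
  proof cases
    case 1
    then have "lattice_midpoint P Q \<in> T" using midpoint_mem assms by (simp add: s_def)
    moreover have "2 * twice_area P (lattice_midpoint P Q) R = twice_area P Q R"
      using twice_area_lattice_midpoint same_parity assms by blast
    ultimately show ?thesis using assms by (metis abs_mult abs_numeral)
  next
    case 2
    then have "lattice_midpoint P R \<in> T" using midpoint_mem assms by (simp add: s_def)
    moreover have "2 * twice_area P (lattice_midpoint P R) Q = - twice_area P Q R"
      using twice_area_lattice_midpoint same_parity assms twice_area_swap by metis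
    ultimately show ?thesis using assms by (metis abs_minus abs_mult abs_numeral)
  next
    case 3
    then have "lattice_midpoint Q R \<in> T" using midpoint_mem assms by (simp add: s_def)
    moreover have "2 * twice_area Q (lattice_midpoint Q R) P = twice_area P Q R"
      using twice_area_lattice_midpoint same_parity assms twice_area_rotate by metis
    ultimately show ?thesis using assms by (metis abs_mult abs_numeral)
  qed
qed

lemma lattice_collinear: "lattice_collinear T"
proof -
  have "(\<lambda>(P, Q, R). P \<in> T \<and> Q \<in> T \<and> R \<in> T \<longrightarrow> twice_area P Q R = 0) X" for X
  proof (induction rule: infinite_descent_measure[where V = "\<lambda>(P, Q, R). nat \<bar>twice_area P Q R\<bar>"])
    case (1 X)
    obtain P Q R where X: "X = (P, Q, R)" by (cases X)
    with 1 have "P \<in> T" "Q \<in> T" "R \<in> T" "twice_area P Q R \<noteq> 0" by auto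
    with exists_half_area_triangle obtain P' Q' R' where "P' \<in> T" "Q' \<in> T" "R' \<in> T"
      "2 * \<bar>twice_area P' Q' R'\<bar> = \<bar>twice_area P Q R\<bar>"
      by blast
    then show ?case using X \<open>twice_area P Q R \<noteq> 0\<close>
      by (intro exI[of _ "(P', Q', R')"]) auto
  qed
  then show ?thesis unfolding lattice_collinear_def by auto
qed

end

lemma lattice_collinear_horizontal_or_inj_snd:
  assumes "lattice_collinear T"
  shows "(\<exists>b. \<forall>P\<in>T. snd P = b) \<or> inj_on snd T"
proof (cases "\<exists>b. \<forall>P\<in>T. snd P = b")
  case False
  show ?thesis
  proof (rule disjI2, rule inj_onI)
    fix P Q assume P: "P \<in> T" and Q: "Q \<in> T" and same_height: "snd P = snd Q"
    obtain R where R: "R \<in> T" "snd R \<noteq> snd P"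
      using False by blast
    have "(fst Q - fst P) * (snd R - snd P) = twice_area P Q R"
      using same_height by (simp add: twice_area_def)
    also have "\<dots> = 0"
      using assms P Q R(1) by (simp add: lattice_collinear_def)
    finally show "P = Q"
      using R(2) same_height by (simp add: prod_eq_iff)
  qed
qed simp

lemma card_lattice_collinear_horizontal:
  assumes "lattice_collinear T" "T \<subseteq> A \<times> B" "finite A" "finite B" "card B < card A"
  shows "card T \<le> card A" and "card T = card A \<Longrightarrow> \<exists>b. T = A \<times> {b}"
proof -
  have "card T \<le> card A \<and> (card T = card A \<longrightarrow> (\<exists>b. T = A \<times> {b}))"
    using lattice_collinear_horizontal_or_inj_snd[OF assms(1)]
  proof
    assume "\<exists>b. \<forall>P\<in>T. snd P = b"
    then obtain b where "T \<subseteq> A \<times> {b}"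
      using assms(2) by fastforce
    moreover have "finite (A \<times> {b})" "card (A \<times> {b}) = card A"
      using assms(3) by (simp_all add: card_cartesian_product)
    ultimately show ?thesis
      by (metis card_mono card_subset_eq)
  next
    assume "inj_on snd T"
    then have "card T = card (snd ` T)"
      by (simp add: card_image)
    also have "\<dots> \<le> card B"
      using assms(2,4) by (intro card_mono) auto
    finally show ?thesis
      using assms(5) by simp
  qed
  then show "card T \<le> card A" and "card T = card A \<Longrightarrow> \<exists>b. T = A \<times> {b}"
    by blast+
qed

lemma card_lattice_collinear_vertical:
  assumes "lattice_collinear T" "T \<subseteq> A \<times> B" "finite A" "finite B" "card A < card B"
  shows "card T \<le> card B" and "card T = card B \<Longrightarrow> \<exists>a. T = {a} \<times> B"
proof -
  have "lattice_collinear (prod.swap ` T)"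
    using assms(1) by (auto simp: lattice_collinear_def twice_area_swap_coordinates)
  moreover have "prod.swap ` T \<subseteq> B \<times> A"
    using assms(2) by auto
  moreover have "card (prod.swap ` T) = card T"
    by (simp add: card_image)
  ultimately have "card T \<le> card B" "card T = card B \<Longrightarrow> \<exists>a. prod.swap ` T = B \<times> {a}"
    using card_lattice_collinear_horizontal[of "prod.swap ` T" B A] assms(3-5) by auto
  moreover have "T = prod.swap ` prod.swap ` T"
    by (simp add: image_image)
  ultimately show "card T \<le> card B" and "card T = card B \<Longrightarrow> \<exists>a. T = {a} \<times> B"
    by (auto simp: product_swap)
qed

section \<open>Islands and island partitions\<close>

lemma island_Int_convex: "convex C \<Longrightarrow> island S (S \<inter> C)"
  unfolding island_def using hull_minimal[of "S \<inter> C" C convex] hull_subset[of "S \<inter> C" convex]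
  by blast

lemma midpoint_in_convex_hull: "p \<in> A \<Longrightarrow> q \<in> A \<Longrightarrow> midpoint p q \<in> convex hull A"
  by (meson closed_segment_subset_convex_hull hull_inc midpoint_in_closed_segment subsetD)

lemma Pair_in_closed_segment_same_snd:
  assumes "x \<in> closed_segment a b"
  shows "(x, y) \<in> closed_segment (a, y) (b, y)"
proof -
  obtain u where u: "0 \<le> u" "u \<le> 1" "x = (1 - u) *\<^sub>R a + u *\<^sub>R b"
    using assms unfolding closed_segment_def by blast
  have "(x, y) = (1 - u) *\<^sub>R (a, y) + u *\<^sub>R (b, y)"
    unfolding u(3) by (simp add: algebra_simps)
  then show ?thesis
    using u(1,2) unfolding closed_segment_def by blast
qed

lemma Pair_in_closed_segment_same_fst:
  assumes "y \<in> closed_segment a b"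
  shows "(x, y) \<in> closed_segment (x, a) (x, b)"
proof -
  obtain u where u: "0 \<le> u" "u \<le> 1" "y = (1 - u) *\<^sub>R a + u *\<^sub>R b"
    using assms unfolding closed_segment_def by blast
  have "(x, y) = (1 - u) *\<^sub>R (x, a) + u *\<^sub>R (x, b)"
    unfolding u(3) by (simp add: algebra_simps)
  then show ?thesis
    using u(1,2) unfolding closed_segment_def by blast
qed

lemma finite_island_partition_cards:
  assumes "finite S"
  shows "finite {card P | P. island_partition S col P}"
proof -
  have "{card P | P. island_partition S col P} \<subseteq> card ` Pow (Pow S)"
    by (auto simp: island_partition_def)
  then show ?thesis
    by (rule finite_subset) (use assms in simp)
qed

lemma Opt_P_le:
  assumes "finite S" "island_partition S col P"
  shows "Opt_P S col \<le> card P"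
  unfolding Opt_P_def using assms finite_island_partition_cards by (intro Min_le) auto

lemma Opt_P_attained:
  assumes "finite S" "island_partition S col P"
  obtains P' where "island_partition S col P'" "Opt_P S col = card P'"
proof -
  have "Opt_P S col \<in> {card P | P. island_partition S col P}"
    unfolding Opt_P_def using assms finite_island_partition_cards by (intro Min_in) auto
  then show ?thesis
    using that by blast
qed

lemma card_le_island_partition:
  assumes "island_partition S col P" "\<And>I. mono_island S col I \<Longrightarrow> card I \<le> m"
  shows "card S \<le> card P * m"
proof -
  have "card S = card (\<Union>P)"
    using assms(1) by (simp add: island_partition_def)
  also have "\<dots> \<le> sum card P"
    by (rule card_Union_le_sum_card)
  also have "\<dots> \<le> card P * m"
    using sum_bounded_above[of P card m] assms by (simp add: island_partition_def)
  finally show ?thesis .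
qed

lemma horizontal_slices_island_partition:
  assumes "\<And>p q. p \<in> S \<Longrightarrow> q \<in> S \<Longrightarrow> snd p = snd q \<Longrightarrow> col p = col q"
  shows "island_partition S col ((\<lambda>y. S \<inter> UNIV \<times> {y}) ` snd ` S)"
proof -
  have slice: "I \<noteq> {} \<and> mono_island S col I" if I: "I \<in> (\<lambda>y. S \<inter> UNIV \<times> {y}) ` snd ` S" for I
  proof -
    obtain p where p: "p \<in> S" "I = S \<inter> UNIV \<times> {snd p}"
      using I by (elim imageE) blast
    have "island S I"
      unfolding p(2) by (rule island_Int_convex) (simp add: convex_Times)
    moreover have "monochromatic col I"
      unfolding monochromatic_def
    proof (intro ballI)
      fix q r assume "q \<in> I" "r \<in> I"
      then show "col q = col r"
        unfolding p(2) by (intro assms) (auto simp: mem_Times_iff)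
    qed
    moreover have "p \<in> I"
      using p by (auto simp: mem_Times_iff)
    ultimately show ?thesis
      unfolding mono_island_def by blast
  qed
  have disjoint: "convex hull A \<inter> convex hull B = {}"
    if AB: "A \<in> (\<lambda>y. S \<inter> UNIV \<times> {y}) ` snd ` S" "B \<in> (\<lambda>y. S \<inter> UNIV \<times> {y}) ` snd ` S" "A \<noteq> B"
    for A B
  proof -
    obtain y y' where A: "A = S \<inter> UNIV \<times> {y}" and B: "B = S \<inter> UNIV \<times> {y'}"
      using AB(1,2) by (elim imageE)
    have "convex hull A \<subseteq> UNIV \<times> {y}" "convex hull B \<subseteq> UNIV \<times> {y'}"
      unfolding A B by (rule hull_minimal; auto simp: convex_Times)+
    moreover have "y \<noteq> y'"
      using A B AB(3) by blast
    ultimately show ?thesis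
      by (auto simp: mem_Times_iff)
  qed
  have "\<Union>((\<lambda>y. S \<inter> UNIV \<times> {y}) ` snd ` S) = S"
    by (auto simp: mem_Times_iff)
  with slice disjoint show ?thesis
    unfolding island_partition_def by blast
qed

section \<open>The board\<close>

definition odds :: "nat \<Rightarrow> int set" where
  "odds k = {a. odd a \<and> 1 \<le> a \<and> a \<le> 2 * int k + 1}"

definition evens :: "nat \<Rightarrow> int set" where
  "evens k = {a. even a \<and> 1 \<le> a \<and> a \<le> 2 * int k + 1}"

lemma odds_eq: "odds k = (\<lambda>i. 2 * i + 1) ` {0..int k}"
  unfolding odds_def image_def by (auto elim!: oddE)

lemma evens_eq: "evens k = (\<lambda>i. 2 * i) ` {1..int k}"
  unfolding evens_def image_def by (auto elim!: evenE)

lemma finite_odds [simp]: "finite (odds k)" and finite_evens [simp]: "finite (evens k)"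
  by (simp_all add: odds_eq evens_eq)

lemma card_odds: "card (odds k) = k + 1"
  by (simp add: odds_eq card_image inj_on_def)

lemma card_evens: "card (evens k) = k"
  by (simp add: evens_eq card_image inj_on_def)

lemma odds_Int_evens: "odds k \<inter> evens k = {}"
  by (auto simp: odds_def evens_def)

definition board_points :: "nat \<Rightarrow> (int \<times> int) set" where
  "board_points k = odds k \<times> evens k \<union> evens k \<times> odds k"

definition of_int_pt :: "int \<times> int \<Rightarrow> point" where
  "of_int_pt P = (of_int (fst P), of_int (snd P))"

definition board :: "nat \<Rightarrow> point set" where
  "board k = of_int_pt ` board_points k"

text \<open>Colour 0 is red: the red points \<^term>\<open>odds k \<times> evens k\<close> fill the rows of even
  height, the blue points \<^term>\<open>evens k \<times> odds k\<close> the columns of even abscissa.\<close>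

definition board_colour :: "point \<Rightarrow> nat" where
  "board_colour p = (if odd \<lfloor>fst p\<rfloor> then 0 else 1)"

lemma inj_of_int_pt: "inj of_int_pt"
  by (auto simp: inj_on_def of_int_pt_def prod_eq_iff)

lemma of_int_pt_components [simp]:
  "fst (of_int_pt P) = of_int (fst P)" "snd (of_int_pt P) = of_int (snd P)"
  by (simp_all add: of_int_pt_def)

lemma of_int_pt_in_board_iff [simp]: "of_int_pt P \<in> board k \<longleftrightarrow> P \<in> board_points k"
  by (simp add: board_def inj_image_mem_iff inj_of_int_pt)

lemma card_of_int_pt_image [simp]: "card (of_int_pt ` A) = card A"
  using inj_on_subset[OF inj_of_int_pt] by (simp add: card_image)

lemma board_colour_of_int_pt [simp]: "board_colour (of_int_pt P) = (if odd (fst P) then 0 else 1)"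
  by (simp add: board_colour_def)

lemma mem_board_points_iff:
  "P \<in> board_points k \<longleftrightarrow>
     1 \<le> fst P \<and> fst P \<le> 2 * int k + 1 \<and> 1 \<le> snd P \<and> snd P \<le> 2 * int k + 1 \<and> odd (fst P + snd P)"
  by (cases P) (auto simp: board_points_def odds_def evens_def)

lemma finite_board: "finite (board k)"
  by (simp add: board_def board_points_def)

lemma card_board: "card (board k) = 2 * k * (k + 1)"
proof -
  have "card (board_points k) = card (odds k \<times> evens k) + card (evens k \<times> odds k)"
    unfolding board_points_def using odds_Int_evens by (intro card_Un_disjoint) auto
  then show ?thesis
    by (simp add: board_def card_cartesian_product card_odds card_evens)
qed

lemma of_int_pt_lattice_midpoint:
  assumes "even (fst P + fst Q)" "even (snd P + snd Q)"
  shows "of_int_pt (lattice_midpoint P Q) = midpoint (of_int_pt P) (of_int_pt Q)"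
proof -
  note M = double_lattice_midpoint[OF assms]
  have "of_int (fst (lattice_midpoint P Q)) = (of_int (fst P) + of_int (fst Q)) / (2 :: real)"
    "of_int (snd (lattice_midpoint P Q)) = (of_int (snd P) + of_int (snd Q)) / (2 :: real)"
    using arg_cong[OF M(1), of "of_int :: int \<Rightarrow> real"] arg_cong[OF M(2), of "of_int :: int \<Rightarrow> real"]
    by simp_all
  then show ?thesis
    by (simp add: of_int_pt_def midpoint_def prod_eq_iff)
qed

lemma of_int_pt_in_horizontal_segment:
  "a1 \<le> a \<Longrightarrow> a \<le> a2 \<Longrightarrow>
    of_int_pt (a, b) \<in> closed_segment (of_int_pt (a1, b)) (of_int_pt (a2, b))"
  unfolding of_int_pt_def fst_conv snd_conv
  by (rule Pair_in_closed_segment_same_snd) (simp add: closed_segment_eq_real_ivl)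

lemma of_int_pt_in_vertical_segment:
  "b1 \<le> b \<Longrightarrow> b \<le> b2 \<Longrightarrow>
    of_int_pt (a, b) \<in> closed_segment (of_int_pt (a, b1)) (of_int_pt (a, b2))"
  unfolding of_int_pt_def fst_conv snd_conv
  by (rule Pair_in_closed_segment_same_fst) (simp add: closed_segment_eq_real_ivl)

lemma evens_bounds: "a \<in> evens k \<Longrightarrow> 2 \<le> a \<and> a \<le> 2 * int k"
  unfolding evens_def mem_Collect_eq by presburger

lemma crossing_neighbours:
  assumes "a \<in> evens k" "b \<in> evens k"
  shows "(a - 1, b) \<in> odds k \<times> evens k" "(a + 1, b) \<in> odds k \<times> evens k"
    "(a, b - 1) \<in> evens k \<times> odds k" "(a, b + 1) \<in> evens k \<times> odds k"
  using assms evens_bounds[OF assms(1)] evens_bounds[OF assms(2)]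
  by (auto simp: odds_def evens_def)

definition red_row :: "nat \<Rightarrow> int \<Rightarrow> point set" where
  "red_row k b = of_int_pt ` (odds k \<times> {b})"

definition blue_column :: "nat \<Rightarrow> int \<Rightarrow> point set" where
  "blue_column k a = of_int_pt ` ({a} \<times> odds k)"

definition full_line :: "nat \<Rightarrow> point set \<Rightarrow> bool" where
  "full_line k L \<longleftrightarrow> (\<exists>b\<in>evens k. L = red_row k b) \<or> (\<exists>a\<in>evens k. L = blue_column k a)"

lemma of_int_pt_in_red_row_iff [simp]: "of_int_pt P \<in> red_row k b \<longleftrightarrow> P \<in> odds k \<times> {b}"
  by (simp add: red_row_def inj_image_mem_iff inj_of_int_pt)

lemma of_int_pt_in_blue_column_iff [simp]: "of_int_pt P \<in> blue_column k a \<longleftrightarrow> P \<in> {a} \<times> odds k"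
  by (simp add: blue_column_def inj_image_mem_iff inj_of_int_pt)

lemma red_row_eq:
  assumes "b \<in> evens k"
  shows "red_row k b = board k \<inter> UNIV \<times> {of_int b}"
proof -
  have "odds k \<times> {b} = board_points k \<inter> UNIV \<times> {b}"
    using assms by (auto simp: board_points_def odds_def evens_def)
  then show ?thesis
    by (auto simp: red_row_def board_def of_int_pt_def)
qed

lemma blue_column_eq:
  assumes "a \<in> evens k"
  shows "blue_column k a = board k \<inter> {of_int a} \<times> UNIV"
proof -
  have "{a} \<times> odds k = board_points k \<inter> {a} \<times> UNIV"
    using assms by (auto simp: board_points_def odds_def evens_def)
  then show ?thesis
    by (auto simp: blue_column_def board_def of_int_pt_def)
qed

lemma card_full_line: "full_line k L \<Longrightarrow> card L = k + 1"
  by (auto simp: full_line_def red_row_def blue_column_def card_cartesian_product card_odds)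

lemma full_line_mono_island:
  assumes "full_line k L"
  shows "mono_island (board k) board_colour L"
proof -
  have "island (board k) L"
    using assms convex_Times[OF convex_UNIV convex_singleton] convex_Times[OF convex_singleton convex_UNIV]
    by (auto simp: full_line_def red_row_eq blue_column_eq intro: island_Int_convex)
  moreover have "monochromatic board_colour L"
    using assms by (auto simp: full_line_def red_row_def blue_column_def monochromatic_def odds_def evens_def)
  ultimately show ?thesis
    by (simp add: mono_island_def)
qed

lemma full_line_through:
  assumes "P \<in> board_points k"
  obtains L where "full_line k L" "of_int_pt P \<in> L"
proof (cases "P \<in> odds k \<times> evens k")
  case True
  then show ?thesis
    by (intro that[of "red_row k (snd P)"]) (auto simp: full_line_def)
next
  case False
  then have "P \<in> evens k \<times> odds k"
    using assms by (simp add: board_points_def)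
  then show ?thesis
    by (intro that[of "blue_column k (fst P)"]) (auto simp: full_line_def)
qed

lemma full_line_unique:
  assumes "full_line k L" "full_line k L'" "x \<in> L" "x \<in> L'"
  shows "L = L'"
proof -
  obtain P where "x = of_int_pt P"
    using assms(1,3) by (auto simp: full_line_def red_row_def blue_column_def)
  then show ?thesis
    using assms odds_Int_evens[of k] by (auto simp: full_line_def)
qed

section \<open>Monochromatic islands of the board\<close>

lemma monochromatic_in_colour_class:
  assumes "I \<subseteq> board k" "monochromatic board_colour I"
  shows "of_int_pt -` I \<subseteq> odds k \<times> evens k \<or> of_int_pt -` I \<subseteq> evens k \<times> odds k"
proof -
  have T: "of_int_pt -` I \<subseteq> board_points k"
    using assms(1) of_int_pt_in_board_iff by blast
  have same: "odd (fst P) \<longleftrightarrow> odd (fst Q)" if "P \<in> of_int_pt -` I" "Q \<in> of_int_pt -` I" for P Q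
  proof -
    have "board_colour (of_int_pt P) = board_colour (of_int_pt Q)"
      using assms(2) that unfolding monochromatic_def by blast
    then show ?thesis
      by (simp split: if_splits)
  qed
  have red: "P \<in> odds k \<times> evens k" if "P \<in> board_points k" "odd (fst P)" for P
    using that by (auto simp: board_points_def evens_def)
  have blue: "P \<in> evens k \<times> odds k" if "P \<in> board_points k" "even (fst P)" for P
    using that by (auto simp: board_points_def odds_def)
  show ?thesis
  proof (cases "\<exists>P \<in> of_int_pt -` I. odd (fst P)")
    case True
    then show ?thesis
      using same T red by blast
  next
    case False
    then show ?thesis
      using T blue by blast
  qed
qed

lemma board_island_lattice_collinear:
  assumes "mono_island (board k) board_colour I"
  shows "lattice_collinear (of_int_pt -` I)"
proof -
  have I_board: "I \<subseteq> board k" and hull_I: "convex hull I \<inter> board k = I"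
    and mono: "monochromatic board_colour I"
    using assms by (auto simp: mono_island_def island_def)
  have T: "of_int_pt -` I \<subseteq> board_points k"
    using I_board of_int_pt_in_board_iff by blast
  have "odd_midpoint_closed (of_int_pt -` I)"
  proof
    fix P Q assume P: "P \<in> of_int_pt -` I" and Q: "Q \<in> of_int_pt -` I"
    from monochromatic_in_colour_class[OF I_board mono]
    show "even (fst P + fst Q) \<and> even (snd P + snd Q)"
      using P Q by (auto simp: odds_def evens_def)
  next
    fix P assume "P \<in> of_int_pt -` I"
    then show "odd (fst P + snd P)"
      using T by (auto simp: mem_board_points_iff)
  next
    fix P Q assume P: "P \<in> of_int_pt -` I" and Q: "Q \<in> of_int_pt -` I"
      and odd_sum: "odd (fst (lattice_midpoint P Q) + snd (lattice_midpoint P Q))"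
    have parity: "even (fst P + fst Q)" "even (snd P + snd Q)"
      using monochromatic_in_colour_class[OF I_board mono] P Q by (auto simp: odds_def evens_def)
    have "P \<in> board_points k" "Q \<in> board_points k"
      using P Q T by auto
    then have "of_int_pt (lattice_midpoint P Q) \<in> board k"
      using double_lattice_midpoint[OF parity] odd_sum
      unfolding of_int_pt_in_board_iff mem_board_points_iff by auto
    moreover have "of_int_pt (lattice_midpoint P Q) \<in> convex hull I"
      unfolding of_int_pt_lattice_midpoint[OF parity]
      using P Q by (intro midpoint_in_convex_hull) auto
    ultimately show "lattice_midpoint P Q \<in> of_int_pt -` I"
      using hull_I by blast
  qed
  then show ?thesis
    by (rule odd_midpoint_closed.lattice_collinear)
qed

lemma card_red_lattice_collinear:
  assumes "lattice_collinear T" "T \<subseteq> odds k \<times> evens k"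
  shows "card T \<le> k + 1" and "card T = k + 1 \<Longrightarrow> \<exists>b\<in>evens k. T = odds k \<times> {b}"
proof -
  have bound: "card T \<le> k + 1" "card T = k + 1 \<Longrightarrow> \<exists>b. T = odds k \<times> {b}"
    using card_lattice_collinear_horizontal[OF assms] by (simp_all add: card_odds card_evens)
  then show "card T \<le> k + 1"
    by simp
  assume "card T = k + 1"
  then obtain b where T: "T = odds k \<times> {b}"
    using bound(2) by blast
  moreover have "odds k \<noteq> {}"
    using card_odds[of k] by auto
  ultimately show "\<exists>b\<in>evens k. T = odds k \<times> {b}"
    using assms(2) by blast
qed

lemma card_blue_lattice_collinear:
  assumes "lattice_collinear T" "T \<subseteq> evens k \<times> odds k"
  shows "card T \<le> k + 1" and "card T = k + 1 \<Longrightarrow> \<exists>a\<in>evens k. T = {a} \<times> odds k"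
proof -
  have bound: "card T \<le> k + 1" "card T = k + 1 \<Longrightarrow> \<exists>a. T = {a} \<times> odds k"
    using card_lattice_collinear_vertical[OF assms] by (simp_all add: card_odds card_evens)
  then show "card T \<le> k + 1"
    by simp
  assume "card T = k + 1"
  then obtain a where T: "T = {a} \<times> odds k"
    using bound(2) by blast
  moreover have "odds k \<noteq> {}"
    using card_odds[of k] by auto
  ultimately show "\<exists>a\<in>evens k. T = {a} \<times> odds k"
    using assms(2) by blast
qed

lemma card_board_island:
  assumes "mono_island (board k) board_colour I"
  shows "card I \<le> k + 1" and "card I = k + 1 \<Longrightarrow> full_line k I"
proof -
  define T where "T = of_int_pt -` I"
  have I_board: "I \<subseteq> board k" and mono: "monochromatic board_colour I"
    using assms by (auto simp: mono_island_def island_def)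
  then have I_eq: "I = of_int_pt ` T"
    unfolding T_def board_def by blast
  have collinear: "lattice_collinear T"
    unfolding T_def by (rule board_island_lattice_collinear[OF assms])
  from monochromatic_in_colour_class[OF I_board mono, folded T_def]
  have "card T \<le> k + 1 \<and> (card T = k + 1 \<longrightarrow> full_line k I)"
  proof
    assume "T \<subseteq> odds k \<times> evens k"
    from card_red_lattice_collinear[OF collinear this] show ?thesis
      by (auto simp: full_line_def I_eq red_row_def)
  next
    assume "T \<subseteq> evens k \<times> odds k"
    from card_blue_lattice_collinear[OF collinear this] show ?thesis
      by (auto simp: full_line_def I_eq blue_column_def)
  qed
  then show "card I \<le> k + 1" and "card I = k + 1 \<Longrightarrow> full_line k I"
    by (simp_all add: I_eq)
qed

lemma board_slices_island_partition:
  "island_partition (board k) board_colour ((\<lambda>y. board k \<inter> UNIV \<times> {y}) ` snd ` board k)"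
proof (rule horizontal_slices_island_partition)
  fix p q assume "p \<in> board k" "q \<in> board k" "snd p = snd q"
  then show "board_colour p = board_colour q"
    by (auto simp: board_def mem_board_points_iff)
qed

lemma Opt_P_board_le: "Opt_P (board k) board_colour \<le> 2 * k + 1"
proof -
  have "snd ` board k \<subseteq> of_int ` {1..2 * int k + 1}"
    by (auto simp: board_def mem_board_points_iff)
  then have "card (snd ` board k) \<le> card (of_int ` {1..2 * int k + 1} :: real set)"
    by (rule card_mono[rotated]) simp
  also have "\<dots> \<le> 2 * k + 1"
    using card_image_le[of "{1..2 * int k + 1}" "of_int :: int \<Rightarrow> real"] by simp
  finally have "card (snd ` board k) \<le> 2 * k + 1" .
  moreover have "card ((\<lambda>y. board k \<inter> UNIV \<times> {y}) ` snd ` board k) \<le> card (snd ` board k)"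
    using finite_board by (intro card_image_le) simp
  ultimately show ?thesis
    using Opt_P_le[OF finite_board board_slices_island_partition[of k]] by linarith
qed

lemma Opt_P_board_ge: "2 * k \<le> Opt_P (board k) board_colour"
proof -
  obtain P where P: "island_partition (board k) board_colour P" "Opt_P (board k) board_colour = card P"
    using Opt_P_attained[OF finite_board board_slices_island_partition] .
  have "2 * k * (k + 1) \<le> card P * (k + 1)"
    using card_le_island_partition[OF P(1) card_board_island(1)] by (simp only: card_board)
  then show ?thesis
    unfolding P(2) by (rule mult_right_le_imp_le) simp
qed

lemma overlap_greedy_full_lines:
  assumes greedy: "overlap_greedy (board k) board_colour Is"
  shows "i < length Is \<Longrightarrow> full_line k (Is ! i)"
proof (induction i rule: less_induct)
  case (less i)
  define C where "C = \<Union>(set (take i Is))"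
  have covers: "\<Union>(set Is) = board k"
    using greedy by (simp add: overlap_greedy_def)
  have uncovered: "C \<noteq> board k" and chosen: "mono_island (board k) board_colour (Is ! i)"
    and maximal: "\<And>I'. mono_island (board k) board_colour I' \<Longrightarrow> card (I' - C) \<le> card (Is ! i - C)"
    using greedy less.prems unfolding overlap_greedy_def C_def Let_def by blast+
  have "C \<subseteq> board k"
    unfolding C_def covers[symmetric] by (intro Union_mono set_take_subset)
  then obtain P where P: "P \<in> board_points k" "of_int_pt P \<notin> C"
    using uncovered unfolding board_def by blast
  obtain L where L: "full_line k L" "of_int_pt P \<in> L"
    using full_line_through[OF P(1)] .
  have earlier: "full_line k L'" if "L' \<in> set (take i Is)" for L'
    using that less.IH by (auto simp: in_set_conv_nth)
  have "L \<inter> C = {}"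
  proof (rule ccontr)
    assume "L \<inter> C \<noteq> {}"
    then obtain L' where "L' \<in> set (take i Is)" "L \<inter> L' \<noteq> {}"
      unfolding C_def by blast
    then have "L' = L"
      using full_line_unique[OF earlier L(1)] by blast
    then show False
      using P(2) L(2) \<open>L' \<in> set (take i Is)\<close> unfolding C_def by blast
  qed
  then have "k + 1 \<le> card (Is ! i - C)"
    using maximal[OF full_line_mono_island[OF L(1)]] card_full_line[OF L(1)] by (simp add: Diff_triv)
  also have "\<dots> \<le> card (Is ! i)"
    using chosen finite_board by (intro card_mono) (auto simp: mono_island_def island_def finite_subset)
  finally show ?case
    using card_board_island[OF chosen] by simp
qed

section \<open>Families compatible with overlap-greedy\<close>

locale line_refinement =
  fixes k :: nat and J :: "point set set"
  assumes covers: "\<Union>J = board k"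
    and within_full_line: "A \<in> J \<Longrightarrow> \<exists>L. full_line k L \<and> A \<subseteq> L"
    and disjoint_hulls: "A \<in> J \<Longrightarrow> B \<in> J \<Longrightarrow> A \<noteq> B \<Longrightarrow> convex hull A \<inter> convex hull B = {}"
begin

lemma finite_J: "finite J"
proof -
  have "finite (\<Union>J)"
    by (simp add: covers finite_board)
  then show ?thesis
    by (rule finite_UnionD)
qed

lemma member_eqI:
  assumes "A \<in> J" "B \<in> J" "x \<in> convex hull A" "x \<in> B"
  shows "A = B"
proof (rule ccontr)
  assume "A \<noteq> B"
  then have "convex hull A \<inter> convex hull B = {}"
    using assms(1,2) by (rule disjoint_hulls[rotated 2])
  moreover have "x \<in> convex hull B"
    using assms(4) by (rule hull_inc)
  ultimately show False
    using assms(3) by blast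
qed

definition cover :: "point \<Rightarrow> point set" where
  "cover x = (THE A. A \<in> J \<and> x \<in> A)"

lemma cover:
  assumes "x \<in> board k"
  shows "cover x \<in> J" and "x \<in> cover x"
proof -
  obtain A where A: "A \<in> J" "x \<in> A"
    using assms covers by blast
  have "cover x = A"
    unfolding cover_def
  proof (rule the_equality)
    fix B assume "B \<in> J \<and> x \<in> B"
    then show "B = A"
      using member_eqI[of B A x] A hull_inc[of x B] by blast
  qed (use A in blast)
  with A show "cover x \<in> J" and "x \<in> cover x"
    by simp_all
qed

lemma cover_eqI:
  assumes "x \<in> board k" "A \<in> J" "x \<in> convex hull A"
  shows "cover x = A"
  using member_eqI[OF assms(2) cover(1)[OF assms(1)] assms(3) cover(2)[OF assms(1)]] by simp

lemma cover_in_red_row: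
  assumes "P \<in> odds k \<times> evens k"
  shows "cover (of_int_pt P) \<subseteq> red_row k (snd P)"
proof -
  have P: "of_int_pt P \<in> board k"
    using assms by (simp add: board_points_def)
  obtain L where L: "full_line k L" "cover (of_int_pt P) \<subseteq> L"
    using within_full_line cover(1)[OF P] by blast
  have "full_line k (red_row k (snd P))" "of_int_pt P \<in> red_row k (snd P)"
    using assms by (auto simp: full_line_def)
  then have "L = red_row k (snd P)"
    using full_line_unique L cover(2)[OF P] by blast
  then show ?thesis
    using L(2) by simp
qed

lemma cover_in_blue_column:
  assumes "P \<in> evens k \<times> odds k"
  shows "cover (of_int_pt P) \<subseteq> blue_column k (fst P)"
proof -
  have P: "of_int_pt P \<in> board k"
    using assms by (simp add: board_points_def)
  obtain L where L: "full_line k L" "cover (of_int_pt P) \<subseteq> L"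
    using within_full_line cover(1)[OF P] by blast
  have "full_line k (blue_column k (fst P))" "of_int_pt P \<in> blue_column k (fst P)"
    using assms by (auto simp: full_line_def)
  then have "L = blue_column k (fst P)"
    using full_line_unique L cover(2)[OF P] by blast
  then show ?thesis
    using L(2) by simp
qed

definition horizontal_split :: "int \<Rightarrow> int \<Rightarrow> bool" where
  "horizontal_split a b \<longleftrightarrow> cover (of_int_pt (a - 1, b)) \<noteq> cover (of_int_pt (a + 1, b))"

definition vertical_split :: "int \<Rightarrow> int \<Rightarrow> bool" where
  "vertical_split a b \<longleftrightarrow> cover (of_int_pt (a, b - 1)) \<noteq> cover (of_int_pt (a, b + 1))"

lemma split_at_crossing:
  assumes "a \<in> evens k" "b \<in> evens k"
  shows "horizontal_split a b \<or> vertical_split a b"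
proof (rule ccontr)
  assume "\<not> (horizontal_split a b \<or> vertical_split a b)"
  then have h: "cover (of_int_pt (a - 1, b)) = cover (of_int_pt (a + 1, b))"
    and v: "cover (of_int_pt (a, b - 1)) = cover (of_int_pt (a, b + 1))"
    by (auto simp: horizontal_split_def vertical_split_def)
  note nb = crossing_neighbours[OF assms]
  have on_board: "of_int_pt (a - 1, b) \<in> board k" "of_int_pt (a + 1, b) \<in> board k"
    "of_int_pt (a, b - 1) \<in> board k" "of_int_pt (a, b + 1) \<in> board k"
    using nb by (simp_all add: board_points_def)
  define A where "A = cover (of_int_pt (a + 1, b))"
  define B where "B = cover (of_int_pt (a, b + 1))"
  have "of_int_pt (a - 1, b) \<in> A" "of_int_pt (a + 1, b) \<in> A"
    using cover(2)[OF on_board(1)] cover(2)[OF on_board(2)] h by (simp_all add: A_def)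
  then have "closed_segment (of_int_pt (a - 1, b)) (of_int_pt (a + 1, b)) \<subseteq> convex hull A"
    by (intro closed_segment_subset_convex_hull hull_inc)
  then have in_A: "of_int_pt (a, b) \<in> convex hull A"
    using of_int_pt_in_horizontal_segment[of "a - 1" a "a + 1" b] by auto
  have B_pts: "of_int_pt (a, b - 1) \<in> B" "of_int_pt (a, b + 1) \<in> B"
    using cover(2)[OF on_board(3)] cover(2)[OF on_board(4)] v by (simp_all add: B_def)
  then have "closed_segment (of_int_pt (a, b - 1)) (of_int_pt (a, b + 1)) \<subseteq> convex hull B"
    by (intro closed_segment_subset_convex_hull hull_inc)
  then have in_B: "of_int_pt (a, b) \<in> convex hull B"
    using of_int_pt_in_vertical_segment[of "b - 1" b "b + 1" a] by auto
  have "of_int_pt (a, b + 1) \<notin> A"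
    using cover_in_red_row[OF nb(2)] assms(1) unfolding A_def by (auto simp: odds_def evens_def)
  then have "A \<noteq> B"
    using B_pts(2) by blast
  moreover have "A \<in> J" "B \<in> J"
    using cover(1)[OF on_board(2)] cover(1)[OF on_board(4)] by (simp_all add: A_def B_def)
  ultimately have "convex hull A \<inter> convex hull B = {}"
    by (rule disjoint_hulls[rotated 2])
  then show False
    using in_A in_B by blast
qed

lemma horizontal_split_cover_neq:
  assumes "a \<in> evens k" "a' \<in> evens k" "b \<in> evens k" "a < a'" "horizontal_split a' b"
  shows "cover (of_int_pt (a + 1, b)) \<noteq> cover (of_int_pt (a' + 1, b))"
proof
  assume eq: "cover (of_int_pt (a + 1, b)) = cover (of_int_pt (a' + 1, b))"
  have on_board: "of_int_pt (a + 1, b) \<in> board k" "of_int_pt (a' - 1, b) \<in> board k"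
    "of_int_pt (a' + 1, b) \<in> board k"
    using crossing_neighbours[OF assms(1,3)] crossing_neighbours[OF assms(2,3)]
    by (simp_all add: board_points_def)
  define A where "A = cover (of_int_pt (a' + 1, b))"
  have "of_int_pt (a + 1, b) \<in> A" "of_int_pt (a' + 1, b) \<in> A"
    using cover(2)[OF on_board(1)] cover(2)[OF on_board(3)] eq by (simp_all add: A_def)
  then have "closed_segment (of_int_pt (a + 1, b)) (of_int_pt (a' + 1, b)) \<subseteq> convex hull A"
    by (intro closed_segment_subset_convex_hull hull_inc)
  \<comment> \<open>the island containing both right neighbours also contains the left neighbour of the
    later crossing, which lies between them\<close>
  moreover have "a + 1 \<le> a' - 1"
    using assms(1,2,4) unfolding evens_def mem_Collect_eq by presburger
  then have "of_int_pt (a' - 1, b) \<in> closed_segment (of_int_pt (a + 1, b)) (of_int_pt (a' + 1, b))"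
    by (intro of_int_pt_in_horizontal_segment) simp_all
  ultimately have "cover (of_int_pt (a' - 1, b)) = A"
    using cover_eqI[OF on_board(2)] cover(1)[OF on_board(3)] unfolding A_def by blast
  then show False
    using assms(5) by (simp add: horizontal_split_def A_def)
qed

lemma vertical_split_cover_neq:
  assumes "a \<in> evens k" "b \<in> evens k" "b' \<in> evens k" "b < b'" "vertical_split a b'"
  shows "cover (of_int_pt (a, b + 1)) \<noteq> cover (of_int_pt (a, b' + 1))"
proof
  assume eq: "cover (of_int_pt (a, b + 1)) = cover (of_int_pt (a, b' + 1))"
  have on_board: "of_int_pt (a, b + 1) \<in> board k" "of_int_pt (a, b' - 1) \<in> board k"
    "of_int_pt (a, b' + 1) \<in> board k"
    using crossing_neighbours[OF assms(1,2)] crossing_neighbours[OF assms(1,3)]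
    by (simp_all add: board_points_def)
  define B where "B = cover (of_int_pt (a, b' + 1))"
  have "of_int_pt (a, b + 1) \<in> B" "of_int_pt (a, b' + 1) \<in> B"
    using cover(2)[OF on_board(1)] cover(2)[OF on_board(3)] eq by (simp_all add: B_def)
  then have "closed_segment (of_int_pt (a, b + 1)) (of_int_pt (a, b' + 1)) \<subseteq> convex hull B"
    by (intro closed_segment_subset_convex_hull hull_inc)
  moreover have "b + 1 \<le> b' - 1"
    using assms(2,3,4) unfolding evens_def mem_Collect_eq by presburger
  then have "of_int_pt (a, b' - 1) \<in> closed_segment (of_int_pt (a, b + 1)) (of_int_pt (a, b' + 1))"
    by (intro of_int_pt_in_vertical_segment) simp_all
  ultimately have "cover (of_int_pt (a, b' - 1)) = B"
    using cover_eqI[OF on_board(2)] cover(1)[OF on_board(3)] unfolding B_def by blast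
  then show False
    using assms(5) by (simp add: vertical_split_def B_def)
qed

lemma red_blue_cover_neq:
  assumes "a \<in> evens k" "b \<in> evens k" "a' \<in> evens k" "b' \<in> evens k"
  shows "cover (of_int_pt (a + 1, b)) \<noteq> cover (of_int_pt (a', b' + 1))"
proof
  assume eq: "cover (of_int_pt (a + 1, b)) = cover (of_int_pt (a', b' + 1))"
  have "of_int_pt (a', b' + 1) \<in> board k"
    using crossing_neighbours(4)[OF assms(3,4)] by (simp add: board_points_def)
  then have "of_int_pt (a', b' + 1) \<in> cover (of_int_pt (a + 1, b))"
    using cover(2) eq by simp
  then have "of_int_pt (a', b' + 1) \<in> red_row k b"
    using cover_in_red_row[OF crossing_neighbours(2)[OF assms(1,2)]] by auto
  then show False
    using assms(3) by (auto simp: odds_def evens_def)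
qed

lemma horizontal_split_cover_inj:
  assumes "a \<in> evens k" "b \<in> evens k" "a' \<in> evens k" "b' \<in> evens k"
    and "horizontal_split a b" "horizontal_split a' b'"
    and eq: "cover (of_int_pt (a + 1, b)) = cover (of_int_pt (a' + 1, b'))"
  shows "(a, b) = (a', b')"
proof -
  have "of_int_pt (a' + 1, b') \<in> board k"
    using crossing_neighbours(2)[OF assms(3,4)] by (simp add: board_points_def)
  then have "of_int_pt (a' + 1, b') \<in> cover (of_int_pt (a + 1, b))"
    using cover(2) eq by simp
  then have "of_int_pt (a' + 1, b') \<in> red_row k b"
    using cover_in_red_row[OF crossing_neighbours(2)[OF assms(1,2)]] by auto
  then have "b' = b"
    by simp
  moreover have "a = a'"
    using horizontal_split_cover_neq[of a a' b] horizontal_split_cover_neq[of a' a b] assms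
      \<open>b' = b\<close> by (cases a a' rule: linorder_cases) auto
  ultimately show ?thesis
    by simp
qed

lemma vertical_split_cover_inj:
  assumes "a \<in> evens k" "b \<in> evens k" "a' \<in> evens k" "b' \<in> evens k"
    and "vertical_split a b" "vertical_split a' b'"
    and eq: "cover (of_int_pt (a, b + 1)) = cover (of_int_pt (a', b' + 1))"
  shows "(a, b) = (a', b')"
proof -
  have "of_int_pt (a', b' + 1) \<in> board k"
    using crossing_neighbours(4)[OF assms(3,4)] by (simp add: board_points_def)
  then have "of_int_pt (a', b' + 1) \<in> cover (of_int_pt (a, b + 1))"
    using cover(2) eq by simp
  then have "of_int_pt (a', b' + 1) \<in> blue_column k a"
    using cover_in_blue_column[OF crossing_neighbours(4)[OF assms(1,2)]] by auto
  then have "a' = a"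
    by simp
  moreover have "b = b'"
    using vertical_split_cover_neq[of a b b'] vertical_split_cover_neq[of a b' b] assms
      \<open>a' = a\<close> by (cases b b' rule: linorder_cases) auto
  ultimately show ?thesis
    by simp
qed

definition split_witness :: "int \<times> int \<Rightarrow> point set" where
  "split_witness c = (if horizontal_split (fst c) (snd c)
     then cover (of_int_pt (fst c + 1, snd c)) else cover (of_int_pt (fst c, snd c + 1)))"

lemma split_witness_in_J:
  assumes "c \<in> evens k \<times> evens k"
  shows "split_witness c \<in> J"
proof -
  have "of_int_pt (fst c + 1, snd c) \<in> board k" "of_int_pt (fst c, snd c + 1) \<in> board k"
    using crossing_neighbours(2,4)[of "fst c" k "snd c"] assms by (auto simp: board_points_def)
  then show ?thesis
    by (simp add: split_witness_def cover(1))
qed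

lemma inj_on_split_witness: "inj_on split_witness (evens k \<times> evens k)"
proof (rule inj_onI)
  fix c c' assume c: "c \<in> evens k \<times> evens k" and c': "c' \<in> evens k \<times> evens k"
    and eq: "split_witness c = split_witness c'"
  obtain a b a' b' where ab: "c = (a, b)" "c' = (a', b')" "a \<in> evens k" "b \<in> evens k"
    "a' \<in> evens k" "b' \<in> evens k"
    using c c' by auto
  show "c = c'"
  proof (cases "horizontal_split a b"; cases "horizontal_split a' b'")
    assume "horizontal_split a b" "horizontal_split a' b'"
    then show ?thesis
      using horizontal_split_cover_inj[OF ab(3-6)] eq by (simp add: ab split_witness_def)
  next
    assume "horizontal_split a b" "\<not> horizontal_split a' b'"
    then show ?thesis
      using red_blue_cover_neq[OF ab(3-6)] eq by (simp add: ab split_witness_def)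
  next
    assume "\<not> horizontal_split a b" "horizontal_split a' b'"
    then show ?thesis
      using red_blue_cover_neq[OF ab(5,6,3,4)] eq by (simp add: ab split_witness_def)
  next
    assume "\<not> horizontal_split a b" "\<not> horizontal_split a' b'"
    then have "vertical_split a b" "vertical_split a' b'"
      using split_at_crossing ab(3-6) by blast+
    then show ?thesis
      using vertical_split_cover_inj[OF ab(3-6)] eq \<open>\<not> horizontal_split a b\<close>
        \<open>\<not> horizontal_split a' b'\<close> by (simp add: ab split_witness_def)
  qed
qed

theorem square_le_card: "k * k \<le> card J"
proof -
  have "card (evens k \<times> evens k) \<le> card J"
    using inj_on_split_witness split_witness_in_J finite_J by (intro card_inj_on_le) auto
  then show ?thesis
    by (simp add: card_cartesian_product card_evens)
qed

end

lemma compatible_line_refinement: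
  assumes greedy: "overlap_greedy (board k) board_colour Is" and "compatible (board k) Is J"
  shows "line_refinement k J"
proof -
  obtain F where J: "J = (\<Union>i<length Is. F i)"
    and union: "(\<Union>i<length Is. \<Union>(F i)) = \<Union>(set Is)"
    and within: "\<forall>i<length Is. \<Union>(F i) \<subseteq> Is ! i"
    and disjoint: "\<forall>A\<in>J. \<forall>B\<in>J. A \<noteq> B \<longrightarrow> convex hull A \<inter> convex hull B = {}"
    using assms(2) unfolding compatible_def by (elim conjE exE) simp
  show ?thesis
  proof
    have "\<Union>J = (\<Union>i<length Is. \<Union>(F i))"
      unfolding J by blast
    also have "\<dots> = board k"
      using union greedy by (simp add: overlap_greedy_def)
    finally show "\<Union>J = board k" .
  next
    fix A assume "A \<in> J"
    then obtain i where i: "i < length Is" "A \<in> F i"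
      unfolding J by blast
    then have "A \<subseteq> Is ! i"
      using within by blast
    then show "\<exists>L. full_line k L \<and> A \<subseteq> L"
      using overlap_greedy_full_lines[OF greedy i(1)] by blast
  next
    fix A B assume "A \<in> J" "B \<in> J" "A \<noteq> B"
    then show "convex hull A \<inter> convex hull B = {}"
      using disjoint by blast
  qed
qed

section \<open>The lower bound\<close>

lemma max_sqrt_mult_le:
  fixes x y m :: real
  assumes "0 \<le> x" "x \<le> m" "y \<le> m\<^sup>2"
  shows "max x (sqrt y) * x \<le> m\<^sup>2"
proof -
  have "sqrt y \<le> m"
    using assms real_le_rsqrt real_sqrt_le_mono by (metis abs_of_nonneg order_trans real_sqrt_abs)
  then have "max x (sqrt y) \<le> m"
    using assms(2) by simp
  then have "max x (sqrt y) * x \<le> m * m"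
    using assms(1,2) by (intro mult_mono) auto
  then show ?thesis
    by (simp add: power2_eq_square)
qed

lemma board_ratio_le:
  assumes "1 \<le> k"
  shows "max (real (Opt_P (board k) board_colour)) (sqrt (real (card (board k))))
      * real (Opt_P (board k) board_colour) \<le> 9 * real (k * k)"
proof -
  have "2 * k * (k + 1) = 2 * (k * k) + 2 * k"
    by (simp add: algebra_simps)
  then have "Opt_P (board k) board_colour \<le> 3 * k" "card (board k) \<le> 9 * (k * k)"
    using assms Opt_P_board_le[of k] le_square[of k] unfolding card_board by linarith+
  then have "max (real (Opt_P (board k) board_colour)) (sqrt (real (card (board k))))
      * real (Opt_P (board k) board_colour) \<le> (3 * real k)\<^sup>2"
    by (intro max_sqrt_mult_le) (simp_all add: power2_eq_square flip: of_nat_mult)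
  then show ?thesis
    by (simp add: power2_eq_square)
qed

theorem lemma4:
  shows "\<exists>c::real. c > 0 \<and>
    (\<forall>N::nat. \<exists>(S::point set) (col::point \<Rightarrow> nat).
        finite S \<and> card S \<ge> N \<and> Opt_P S col \<ge> N \<and>
        (\<forall>Is. overlap_greedy S col Is \<longrightarrow>
           (\<forall>J. compatible S Is J \<longrightarrow>
              real (card J) \<ge> c * max (real (Opt_P S col)) (sqrt (real (card S))) * real (Opt_P S col))))"
proof (intro exI[of _ "1 / 9"] conjI allI)
  fix N :: nat
  define k where "k = N + 1"
  show "\<exists>(S::point set) (col::point \<Rightarrow> nat).
      finite S \<and> card S \<ge> N \<and> Opt_P S col \<ge> N \<and>
      (\<forall>Is. overlap_greedy S col Is \<longrightarrow>
         (\<forall>J. compatible S Is J \<longrightarrow>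
            real (card J) \<ge> 1 / 9 * max (real (Opt_P S col)) (sqrt (real (card S))) * real (Opt_P S col)))"
  proof (intro exI[of _ "board k"] exI[of _ board_colour] conjI allI impI)
    show "finite (board k)" "N \<le> card (board k)" "N \<le> Opt_P (board k) board_colour"
      using finite_board Opt_P_board_ge[of k] by (simp_all add: card_board k_def)
    fix Is J
    assume "overlap_greedy (board k) board_colour Is" "compatible (board k) Is J"
    then have "k * k \<le> card J"
      by (rule line_refinement.square_le_card[OF compatible_line_refinement])
    then have "real (k * k) \<le> real (card J)"
      by (simp only: of_nat_le_iff)
    moreover have "1 \<le> k"
      by (simp add: k_def)
    ultimately show "1 / 9 * max (real (Opt_P (board k) board_colour)) (sqrt (real (card (board k))))
        * real (Opt_P (board k) board_colour) \<le> real (card J)"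
      using board_ratio_le[of k] by simp
  qed
qed simp

end
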